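(* Let $G$ be a gradual mechanism for a social choice function $f$, and for an agent $i$ let $\boldsymbol{Z}_i$ be a partition of the terminal histories $Z$ such that the extended family of information sets $\overline{\boldsymbol{H}}_i=\boldsymbol{H}_i\cup\boldsymbol{Z}_i$ still satisfies perfect recall. For each $\boldsymbol{h}_i\in\overline{\boldsymbol{H}}_i$ let $\Theta(\boldsymbol{h}_i)=\bigcup_{h\in\boldsymbol{h}_i}\Theta(h)$ and $\Theta_{-i}(\boldsymbol{h}_i)=\bigcup_{h\in\boldsymbol{h}_i}\Theta_{-i}(h)$. Then the information flow $\mathbb{F}_i=\{\Theta(\boldsymbol{h}_i):\boldsymbol{h}_i\in\overline{\boldsymbol{H}}_i\}$ of agent $i$ satisfies: 1. For any $\underline{\boldsymbol{h}}_i\in\boldsymbol{H}_i$, $\{\Theta(\boldsymbol{h}_i)\}_{\boldsymbol{h}_i\in\sigma(\underline{\boldsymbol{h}}_i)}$ is a partition of $\Theta(\underline{\boldsymbol{h}}_i)$. 2. For any $\underline{\boldsymbol{h}}_i\in\boldsymbol{H}_i$ and any $a_i\in A_i(\underline{\boldsymbol{h}}_i)$, $\{\Theta_{-i}(\boldsymbol{h}_i)\}_{\boldsymbol{h}_i\in\sigma_{a_i}(\underline{\boldsymbol{h}}_i)}$ is a partition of $\Theta_{-i}(\underline{\boldsymbol{h}}_i)$.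
   Context: A finite set $N$ of agents; each agent $i$ has a type space $\Theta_i$, $\Theta=\prod_{i\in N}\Theta_i$; $f:\Theta\to X$ is a social choice function. A dynamic game form with perfect recall $G=(\overline{H},\{A_i,\boldsymbol{H}_i\}_{i\in N},\mathcal{X})$: each agent $i$ has a nonempty action set $A_i$; an action profile is an element of $\prod_{i\in M}A_i$ for some nonempty $M\subseteq N$. Histories are finite sequences of action profiles; $\overline{H}$ is a finite-length tree of such sequences containing $\varnothing$ and closed under immediate predecessors; $\preceq$ is the prefix order. $Z$ = $\preceq$-maximal (terminal) histories, $H=\overline{H}\setminus Z$. An active-player correspondence $\mathbb{P}:H\twoheadrightarrow N$ is such that the immediate successors of $h\in H$ are exactly $(h,a)$, $a\in\prod_{i\in\mathbb{P}(h)}A_i(h)$, with $A_i(h)$ the actions available to $i$ at $h$. $H_i=\{h\in H:i\in\mathbb{P}(h)\}$, and $\boldsymbol{H}_i$ is a partition of $H_i$ into information sets on which $A_i(\cdot)$ is constant (written $A_i(\boldsymbol{h}_i)$). Perfect recall: for $h,\tilde h$ in the same information set, $h_i=\tilde h_i$, and for every $\underline h\preceq h$ in an information set of $i$ there is $\underline{\tilde h}\preceq\tilde h$ in the same information set as $\underline h$. Here $h_i$ denotes the sequence of actions of $i$ in $h$. $\mathcal{X}:Z\to X$. A gradual mechanism for $f$ is such a game form with: (1) $A_i=2^{\Theta_i}\setminus\{\varnothing\}$; (2) for $h\in H_i$, the sets in $A_i(h)$ are pairwise disjoint with union $\bigcap h_i$ (the intersection of $i$'s actions in $h$; $\Theta_i$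 if none); (3) for $z\in Z$ and $\theta\in\prod_i\Theta_i(z)$, $\mathcal{X}(z)=f(\theta)$. For $h\in\overline{H}$, $\Theta_j(h)$ is the last action of agent $j$ in $h$ if $j$ has acted, and $\Theta_j$ otherwise; $\Theta(h)=\prod_{j\in N}\Theta_j(h)$ and $\Theta_{-i}(h)=\prod_{j\neq i}\Theta_j(h)$. On $\overline{\boldsymbol{H}}_i$ the precedence $\underline{\boldsymbol{h}}_i\preceq\boldsymbol{h}_i$ holds if there are $\underline h\in\underline{\boldsymbol{h}}_i$, $h\in\boldsymbol{h}_i$ with $\underline h\preceq h$; this makes $\overline{\boldsymbol{H}}_i$ an arborescence. $\sigma(\underline{\boldsymbol{h}}_i)$ denotes the set of immediate successors of $\underline{\boldsymbol{h}}_i$ in $\overline{\boldsymbol{H}}_i$, and for $a_i\in A_i(\underline{\boldsymbol{h}}_i)$, $\sigma_{a_i}(\underline{\boldsymbol{h}}_i)$ is the subset of those immediate successors reached after $i$ takes action $a_i$ at $\underline{\boldsymbol{h}}_i$ (equivalently those $\boldsymbol{h}_i$ with $\Theta_i(\boldsymbol{h}_i)=a_i$, where $\Theta_i(\boldsymbol{h}_i)$ is the common value of $\Theta_i(h)$, $h\in\boldsymbol{h}_i$). *)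

theory Defs
  imports Main "HOL-Library.Sublist" "HOL-Library.FuncSet"
begin

(* Agents: a finite type 'n (N = UNIV).
   An action profile is a partial map 'n => 'b option with nonempty domain M;
   a history is a finite list of action profiles. *)
type_synonym ('n,'b) hist = "('n \<Rightarrow> 'b option) list"

definition own :: "'n \<Rightarrow> ('n,'b) hist \<Rightarrow> 'b list" where
  "own i h = List.map_filter (\<lambda>a. a i) h"

definition terminal :: "('n,'b) hist set \<Rightarrow> ('n,'b) hist set" where
  "terminal Hb = {z \<in> Hb. \<forall>h\<in>Hb. prefix z h \<longrightarrow> h = z}"

definition nonterm_hist :: "('n,'b) hist set \<Rightarrow> ('n,'b) hist set" where
  "nonterm_hist Hb = Hb - terminal Hb"

definition active_hist :: "('n,'b) hist set \<Rightarrow> (('n,'b) hist \<Rightarrow> 'n set) \<Rightarrow> 'n \<Rightarrow> ('n,'b) hist set" where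
  "active_hist Hb P i = {h \<in> nonterm_hist Hb. i \<in> P h}"

definition is_partition :: "'a set set \<Rightarrow> 'a set \<Rightarrow> bool" where
  "is_partition F S \<longleftrightarrow> (\<forall>b\<in>F. b \<noteq> {}) \<and> (\<forall>b\<in>F. \<forall>c\<in>F. b \<noteq> c \<longrightarrow> b \<inter> c = {}) \<and> \<Union>F = S"

definition indexed_partition :: "'i set \<Rightarrow> ('i \<Rightarrow> 'a set) \<Rightarrow> 'a set \<Rightarrow> bool" where
  "indexed_partition I F S \<longleftrightarrow> (\<forall>x\<in>I. F x \<noteq> {}) \<and>
     (\<forall>x\<in>I. \<forall>y\<in>I. x \<noteq> y \<longrightarrow> F x \<inter> F y = {}) \<and> (\<Union>x\<in>I. F x) = S"

definition perfect_recall :: "'n \<Rightarrow> ('n,'b) hist set set \<Rightarrow> bool" where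
  "perfect_recall i fam \<longleftrightarrow>
     (\<forall>b\<in>fam. \<forall>h\<in>b. \<forall>h'\<in>b. own i h = own i h' \<and>
        (\<forall>c\<in>fam. \<forall>l\<in>c. prefix l h \<longrightarrow> (\<exists>l'\<in>c. prefix l' h')))"

(* Dynamic game form with perfect recall.
   Act i = A_i, Hb = Hbar, P = active-player correspondence, A i h = A_i(h),
   Info i = partition of H_i into information sets, X = outcome function on Z. *)
definition game_form ::
  "('n \<Rightarrow> 'b set) \<Rightarrow> ('n,'b) hist set \<Rightarrow> (('n,'b) hist \<Rightarrow> 'n set) \<Rightarrow>
   ('n \<Rightarrow> ('n,'b) hist \<Rightarrow> 'b set) \<Rightarrow> ('n \<Rightarrow> ('n,'b) hist set set) \<Rightarrow> (('n,'b) hist \<Rightarrow> 'x) \<Rightarrow> bool" where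
  "game_form Act Hb P A Info X \<longleftrightarrow>
     (\<forall>i. Act i \<noteq> {}) \<and>
     (\<forall>h\<in>Hb. \<forall>a\<in>set h. dom a \<noteq> {} \<and> (\<forall>i\<in>dom a. the (a i) \<in> Act i)) \<and>
     [] \<in> Hb \<and> (\<forall>h a. h @ [a] \<in> Hb \<longrightarrow> h \<in> Hb) \<and>
     (\<exists>n. \<forall>h\<in>Hb. length h \<le> n) \<and>
     (\<forall>h\<in>nonterm_hist Hb. (\<forall>i\<in>P h. A i h \<subseteq> Act i) \<and>
        {a. h @ [a] \<in> Hb} = {a. dom a = P h \<and> (\<forall>i\<in>P h. \<exists>x\<in>A i h. a i = Some x)}) \<and>
     (\<forall>i. is_partition (Info i) (active_hist Hb P i)) \<and>
     (\<forall>i. \<forall>b\<in>Info i. \<forall>h\<in>b. \<forall>h'\<in>b. A i h = A i h') \<and>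
     (\<forall>i. perfect_recall i (Info i))"

(* A_i of an information set (A_i is constant on information sets) *)
definition A_info :: "('n \<Rightarrow> ('n,'b) hist \<Rightarrow> 'b set) \<Rightarrow> 'n \<Rightarrow> ('n,'b) hist set \<Rightarrow> 'b set" where
  "A_info A i b = A i (SOME h. h \<in> b)"

definition type_at :: "('n \<Rightarrow> 't set) \<Rightarrow> 'n \<Rightarrow> ('n,'t set) hist \<Rightarrow> 't set" where
  "type_at Th j h = (if own j h = [] then Th j else last (own j h))"

definition ThetaP :: "('n \<Rightarrow> 't set) \<Rightarrow> ('n,'t set) hist \<Rightarrow> ('n \<Rightarrow> 't) set" where
  "ThetaP Th h = Pi UNIV (\<lambda>j. type_at Th j h)"

definition ThetaM :: "('n \<Rightarrow> 't set) \<Rightarrow> 'n \<Rightarrow> ('n,'t set) hist \<Rightarrow> ('n \<Rightarrow> 't) set" where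
  "ThetaM Th i h = PiE (UNIV - {i}) (\<lambda>j. type_at Th j h)"

definition ThetaS :: "('n \<Rightarrow> 't set) \<Rightarrow> ('n,'t set) hist set \<Rightarrow> ('n \<Rightarrow> 't) set" where
  "ThetaS Th b = (\<Union>h\<in>b. ThetaP Th h)"

definition ThetaMS :: "('n \<Rightarrow> 't set) \<Rightarrow> 'n \<Rightarrow> ('n,'t set) hist set \<Rightarrow> ('n \<Rightarrow> 't) set" where
  "ThetaMS Th i b = (\<Union>h\<in>b. ThetaM Th i h)"

definition own_inter :: "('n \<Rightarrow> 't set) \<Rightarrow> 'n \<Rightarrow> ('n,'t set) hist \<Rightarrow> 't set" where
  "own_inter Th i h = (if own i h = [] then Th i else \<Inter>(set (own i h)))"

definition gradual_mechanism ::
  "('n \<Rightarrow> 't set) \<Rightarrow> (('n \<Rightarrow> 't) \<Rightarrow> 'x) \<Rightarrow> ('n,'t set) hist set \<Rightarrow> (('n,'t set) hist \<Rightarrow> 'n set) \<Rightarrow>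
   ('n \<Rightarrow> ('n,'t set) hist \<Rightarrow> 't set set) \<Rightarrow> ('n \<Rightarrow> ('n,'t set) hist set set) \<Rightarrow> (('n,'t set) hist \<Rightarrow> 'x) \<Rightarrow> bool" where
  "gradual_mechanism Th f Hb P A Info X \<longleftrightarrow>
     game_form (\<lambda>i. {a. a \<noteq> {} \<and> a \<subseteq> Th i}) Hb P A Info X \<and>
     (\<forall>h\<in>nonterm_hist Hb. \<forall>i\<in>P h.
        (\<forall>a\<in>A i h. \<forall>a'\<in>A i h. a \<noteq> a' \<longrightarrow> a \<inter> a' = {}) \<and> \<Union>(A i h) = own_inter Th i h) \<and>
     (\<forall>z\<in>terminal Hb. \<forall>\<theta>\<in>ThetaP Th z. X z = f \<theta>)"

definition info_prec :: "('n,'b) hist set \<Rightarrow> ('n,'b) hist set \<Rightarrow> bool" where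
  "info_prec b b' \<longleftrightarrow> (\<exists>h\<in>b. \<exists>h'\<in>b'. prefix h h')"

definition info_sprec :: "('n,'b) hist set \<Rightarrow> ('n,'b) hist set \<Rightarrow> bool" where
  "info_sprec b b' \<longleftrightarrow> info_prec b b' \<and> b \<noteq> b'"

definition succ_info :: "('n,'b) hist set set \<Rightarrow> ('n,'b) hist set \<Rightarrow> ('n,'b) hist set set" where
  "succ_info fam b = {b' \<in> fam. info_sprec b b' \<and> \<not> (\<exists>c\<in>fam. info_sprec b c \<and> info_sprec c b')}"

definition succ_act :: "'n \<Rightarrow> ('n,'b) hist set set \<Rightarrow> ('n,'b) hist set \<Rightarrow> 'b \<Rightarrow> ('n,'b) hist set set" where
  "succ_act i fam b a = {b' \<in> succ_info fam b.
      \<exists>h\<in>b. \<exists>h'\<in>b'. \<exists>p. prefix (h @ [p]) h' \<and> p i = Some a}"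

end

theory Submission
  imports Defs
begin

text \<open>
  Along a history every type set \<open>type_at Th j h\<close> only shrinks, and at a history where
  j moves the available actions partition it. Hence two histories whose type boxes meet cannot
  have split, i.e. they are comparable, and every profile of a type box can be followed move by
  move down to a terminal history. By perfect recall of \<open>Info i \<union> Zi\<close>, the first of its sets met
  strictly below an information set b on such a path is an immediate successor of b, so every
  profile of b lies in exactly one successor. For the profiles of the other agents, two histories
  whose boxes meet can only split at a move of i; if both follow the same action a at b, that
  move comes after b and the information set containing it would lie strictly between b and
  the successors.
\<close>

lemma own_Nil [simp]: "own i [] = []"
  by (simp add: own_def)

lemma own_Cons: "own i (x # xs) = (case x i of None \<Rightarrow> own i xs | Some v \<Rightarrow> v # own i xs)"
  by (simp add: own_def map_filter_simps split: option.split)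

lemma own_append [simp]: "own i (xs @ ys) = own i xs @ own i ys"
  by (induction xs) (simp_all add: own_Cons split: option.split)

lemma prefix_own: "prefix u v \<Longrightarrow> prefix (own i u) (own i v)"
  by (auto simp: prefix_def)

lemma type_at_snoc: "type_at Th j (w @ [x]) = (case x j of None \<Rightarrow> type_at Th j w | Some y \<Rightarrow> y)"
  by (cases "x j") (simp_all add: type_at_def own_Cons)

lemma is_partitionD:
  assumes "is_partition F S"
  shows is_partition_nonempty: "b \<in> F \<Longrightarrow> b \<noteq> {}"
    and is_partition_disjoint: "b \<in> F \<Longrightarrow> c \<in> F \<Longrightarrow> x \<in> b \<Longrightarrow> x \<in> c \<Longrightarrow> b = c"
    and is_partition_Union: "\<Union>F = S"
  using assms unfolding is_partition_def by blast+

lemma same_prefix_nth_eq: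
  assumes "us @ x # xs = ws @ a # ys" "us @ y # zs = ws @ a # ys'" "length us \<le> length ws"
  shows "x = y"
proof -
  have "x = (ws @ a # ys) ! length us"
    using assms(1) by (metis nth_append_length)
  also have "\<dots> = (ws @ a # ys') ! length us"
    using assms(3) by (simp add: nth_append nth_Cons')
  also have "\<dots> = y"
    using assms(2) by (metis nth_append_length)
  finally show ?thesis .
qed

lemma ThetaP_iff: "\<theta> \<in> ThetaP Th h \<longleftrightarrow> (\<forall>j. \<theta> j \<in> type_at Th j h)"
  by (auto simp: ThetaP_def Pi_iff)

lemma ThetaM_iff:
  "\<theta> \<in> ThetaM Th i h \<longleftrightarrow> \<theta> i = undefined \<and> (\<forall>j. j \<noteq> i \<longrightarrow> \<theta> j \<in> type_at Th j h)"
  by (auto simp: ThetaM_def PiE_iff extensional_def)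

lemma ThetaM_upd_in_ThetaP:
  "\<theta> \<in> ThetaM Th i h \<Longrightarrow> t \<in> type_at Th i h \<Longrightarrow> \<theta>(i := t) \<in> ThetaP Th h"
  by (simp add: ThetaM_iff ThetaP_iff)

lemma ThetaP_upd_in_ThetaM:
  "\<theta> \<in> ThetaM Th i h \<Longrightarrow> \<theta>(i := t) \<in> ThetaP Th g \<Longrightarrow> \<theta> \<in> ThetaM Th i g"
  by (simp add: ThetaM_iff ThetaP_iff) (metis fun_upd_other)

locale gradual =
  fixes Th :: "'n \<Rightarrow> 't set"
    and f :: "('n \<Rightarrow> 't) \<Rightarrow> 'x"
    and Hb :: "('n, 't set) hist set"
    and P :: "('n, 't set) hist \<Rightarrow> 'n set"
    and A :: "'n \<Rightarrow> ('n, 't set) hist \<Rightarrow> 't set set"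
    and Info :: "'n \<Rightarrow> ('n, 't set) hist set set"
    and X :: "('n, 't set) hist \<Rightarrow> 'x"
  assumes gradual: "gradual_mechanism Th f Hb P A Info X"
begin

lemma game_form: "game_form (\<lambda>i. {a. a \<noteq> {} \<and> a \<subseteq> Th i}) Hb P A Info X"
  using gradual by (simp add: gradual_mechanism_def)

lemma Th_nonempty: "Th j \<noteq> {}"
proof -
  have "\<forall>i. {a. a \<noteq> {} \<and> a \<subseteq> Th i} \<noteq> {}"
    using game_form unfolding game_form_def by (elim conjE) assumption
  then show ?thesis
    by blast
qed

lemma Nil_in_Hb: "[] \<in> Hb"
  using game_form unfolding game_form_def by (elim conjE) assumption

lemma butlast_in_Hb: "h @ [a] \<in> Hb \<Longrightarrow> h \<in> Hb"
proof -
  have "\<forall>h a. h @ [a] \<in> Hb \<longrightarrow> h \<in> Hb"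
    using game_form unfolding game_form_def by (elim conjE) assumption
  then show "h @ [a] \<in> Hb \<Longrightarrow> h \<in> Hb"
    by blast
qed

lemma length_bounded: "\<exists>n. \<forall>h\<in>Hb. length h \<le> n"
  using game_form unfolding game_form_def by (elim conjE) assumption

lemma prefix_closed: "v \<in> Hb \<Longrightarrow> prefix u v \<Longrightarrow> u \<in> Hb"
proof (induction v rule: rev_induct)
  case Nil
  then show ?case
    using Nil_in_Hb by simp
next
  case (snoc x xs)
  show ?case
  proof (cases "u = xs @ [x]")
    case False
    then show ?thesis
      using snoc butlast_in_Hb[OF snoc.prems(1)] by simp
  qed (use snoc.prems in simp)
qed

lemma nonterm_hist_conditions:
  "\<forall>h\<in>nonterm_hist Hb. (\<forall>i\<in>P h. A i h \<subseteq> {a. a \<noteq> {} \<and> a \<subseteq> Th i}) \<and>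
     {a. h @ [a] \<in> Hb} = {a. dom a = P h \<and> (\<forall>i\<in>P h. \<exists>x\<in>A i h. a i = Some x)}"
  using game_form unfolding game_form_def by (elim conjE) assumption

lemma snoc_in_Hb_iff:
  assumes "h \<in> nonterm_hist Hb"
  shows "h @ [a] \<in> Hb \<longleftrightarrow> dom a = P h \<and> (\<forall>j\<in>P h. \<exists>x\<in>A j h. a j = Some x)"
proof -
  have "{a. h @ [a] \<in> Hb} = {a. dom a = P h \<and> (\<forall>j\<in>P h. \<exists>x\<in>A j h. a j = Some x)}"
    using conjunct2[OF bspec[OF nonterm_hist_conditions assms]] .
  then show ?thesis
    by (simp add: set_eq_iff)
qed

lemma A_nonempty: "h \<in> nonterm_hist Hb \<Longrightarrow> j \<in> P h \<Longrightarrow> x \<in> A j h \<Longrightarrow> x \<noteq> {}"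
  using conjunct1[OF bspec[OF nonterm_hist_conditions]] by blast

lemma A_disjoint_Union:
  "h \<in> nonterm_hist Hb \<Longrightarrow> j \<in> P h \<Longrightarrow>
     (\<forall>x\<in>A j h. \<forall>y\<in>A j h. x \<noteq> y \<longrightarrow> x \<inter> y = {}) \<and> \<Union>(A j h) = own_inter Th j h"
  using gradual unfolding gradual_mechanism_def by (elim conjE) blast

lemma A_disjoint:
  "h \<in> nonterm_hist Hb \<Longrightarrow> j \<in> P h \<Longrightarrow> x \<in> A j h \<Longrightarrow> y \<in> A j h \<Longrightarrow> x \<noteq> y \<Longrightarrow> x \<inter> y = {}"
  using A_disjoint_Union by blast

lemma Info_partition: "is_partition (Info j) (active_hist Hb P j)"
proof -
  have "\<forall>i. is_partition (Info i) (active_hist Hb P i)"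
    using game_form unfolding game_form_def by (elim conjE) assumption
  then show ?thesis
    by blast
qed

lemma Info_active: "b \<in> Info j \<Longrightarrow> h \<in> b \<Longrightarrow> h \<in> active_hist Hb P j"
  using is_partition_Union[OF Info_partition[of j]] by blast

lemma A_info_eq:
  assumes "b \<in> Info j" "h \<in> b"
  shows "A_info A j b = A j h"
proof -
  have "\<forall>i. \<forall>b\<in>Info i. \<forall>h\<in>b. \<forall>h'\<in>b. A i h = A i h'"
    using game_form unfolding game_form_def by (elim conjE) assumption
  moreover have "(SOME h. h \<in> b) \<in> b"
    using assms(2) by (rule someI)
  ultimately show ?thesis
    using assms unfolding A_info_def by blast
qed

lemma nonterm_of_snoc:
  assumes "w @ [x] \<in> Hb"
  shows "w \<in> nonterm_hist Hb"
proof -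
  have "w \<in> Hb" "prefix w (w @ [x])" "w @ [x] \<noteq> w"
    using butlast_in_Hb[OF assms] by simp_all
  then show ?thesis
    using assms unfolding nonterm_hist_def terminal_def by blast
qed

lemma snoc_action: "w @ [x] \<in> Hb \<Longrightarrow> x j = Some y \<Longrightarrow> j \<in> P w \<and> y \<in> A j w"
  using snoc_in_Hb_iff[OF nonterm_of_snoc] by (metis domI option.inject)

lemma own_inter_eq_type_at: "v \<in> Hb \<Longrightarrow> own_inter Th j v = type_at Th j v"
proof (induction v rule: rev_induct)
  case Nil
  then show ?case by (simp add: own_inter_def type_at_def)
next
  case (snoc x w)
  have IH: "own_inter Th j w = type_at Th j w"
    using snoc.IH butlast_in_Hb[OF snoc.prems] .
  show ?case
  proof (cases "x j")
    case None
    then show ?thesis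
      using IH by (cases "own j w = []") (simp_all add: own_inter_def type_at_def own_Cons)
  next
    case (Some y)
    have "j \<in> P w" "y \<in> A j w"
      using snoc_action snoc.prems Some by blast+
    then have "y \<subseteq> own_inter Th j w"
      using A_disjoint_Union nonterm_of_snoc[OF snoc.prems] by blast
    then show ?thesis
      using Some by (cases "own j w = []") (auto simp: own_inter_def type_at_def own_Cons)
  qed
qed

lemma Union_A_eq_type_at: "h \<in> nonterm_hist Hb \<Longrightarrow> j \<in> P h \<Longrightarrow> \<Union>(A j h) = type_at Th j h"
  using A_disjoint_Union own_inter_eq_type_at[of h j] unfolding nonterm_hist_def by blast

lemma type_at_snoc_subset:
  assumes "w @ [x] \<in> Hb"
  shows "type_at Th j (w @ [x]) \<subseteq> type_at Th j w"
proof (cases "x j")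
  case (Some y)
  then show ?thesis
    using snoc_action[OF assms Some] Union_A_eq_type_at[OF nonterm_of_snoc[OF assms]]
    by (auto simp: type_at_snoc)
qed (simp add: type_at_snoc)

lemma type_at_antimono: "v \<in> Hb \<Longrightarrow> prefix u v \<Longrightarrow> type_at Th j v \<subseteq> type_at Th j u"
proof (induction v rule: rev_induct)
  case (snoc x w)
  show ?case
  proof (cases "u = w @ [x]")
    case False
    then have "prefix u w"
      using snoc.prems by simp
    then show ?thesis
      using snoc.IH[OF butlast_in_Hb[OF snoc.prems(1)]] type_at_snoc_subset[OF snoc.prems(1)]
      by blast
  qed simp
qed simp

lemma type_at_nonempty: "v \<in> Hb \<Longrightarrow> type_at Th j v \<noteq> {}"
proof (induction v rule: rev_induct)
  case Nil
  then show ?case using Th_nonempty by (simp add: type_at_def)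
next
  case (snoc x w)
  show ?case
  proof (cases "x j")
    case None
    then show ?thesis
      using snoc.IH[OF butlast_in_Hb[OF snoc.prems]] by (simp add: type_at_snoc)
  next
    case (Some y)
    then show ?thesis
      using snoc_action[OF snoc.prems Some] A_nonempty[OF nonterm_of_snoc[OF snoc.prems]]
      by (auto simp: type_at_snoc)
  qed
qed

lemma ThetaP_antimono: "v \<in> Hb \<Longrightarrow> prefix u v \<Longrightarrow> ThetaP Th v \<subseteq> ThetaP Th u"
  using type_at_antimono unfolding ThetaP_def by (meson Pi_mono)

lemma ThetaM_antimono: "v \<in> Hb \<Longrightarrow> prefix u v \<Longrightarrow> ThetaM Th i v \<subseteq> ThetaM Th i u"
  using type_at_antimono unfolding ThetaM_def by (meson PiE_mono)

lemma ThetaP_nonempty: "v \<in> Hb \<Longrightarrow> ThetaP Th v \<noteq> {}"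
  using type_at_nonempty unfolding ThetaP_def by simp

lemma ThetaM_nonempty: "v \<in> Hb \<Longrightarrow> ThetaM Th i v \<noteq> {}"
  using type_at_nonempty unfolding ThetaM_def by (simp add: PiE_eq_empty_iff)

lemma own_length_less:
  assumes u: "u \<in> active_hist Hb P j" and v: "v \<in> Hb" "prefix u v" "u \<noteq> v"
  shows "length (own j u) < length (own j v)"
proof -
  obtain x r where vr: "v = u @ x # r"
    using v(2,3) by (metis prefixE append_Nil2 neq_Nil_conv)
  have "u @ [x] \<in> Hb"
    using prefix_closed[OF v(1), of "u @ [x]"] vr by simp
  then have "dom x = P u"
    using snoc_in_Hb_iff u by (auto simp: active_hist_def)
  then have "x j \<noteq> None"
    using u by (auto simp: active_hist_def)
  then show ?thesis
    using vr by (auto simp: own_Cons)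
qed

lemma divergence_point:
  assumes "as @ x # r1 \<in> Hb" "as @ y # r2 \<in> Hb" "x j \<noteq> y j"
  obtains x' y' where "as \<in> active_hist Hb P j" "x j = Some x'" "y j = Some y'"
    "x' \<in> A j as" "y' \<in> A j as" "x' \<noteq> y'"
proof -
  have x: "as @ [x] \<in> Hb" and y: "as @ [y] \<in> Hb"
    using prefix_closed[OF assms(1), of "as @ [x]"] prefix_closed[OF assms(2), of "as @ [y]"]
    by simp_all
  have nt: "as \<in> nonterm_hist Hb"
    using nonterm_of_snoc x by blast
  have dom: "dom x = P as" "dom y = P as"
    using snoc_in_Hb_iff[OF nt, of x] snoc_in_Hb_iff[OF nt, of y] x y by simp_all
  have jP: "j \<in> P as"
  proof (rule ccontr)
    assume "j \<notin> P as"
    then have "x j = None" "y j = None"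
      using dom by (metis domIff)+
    then show False
      using assms(3) by simp
  qed
  obtain x' where x': "x j = Some x'" "x' \<in> A j as"
    using snoc_in_Hb_iff[OF nt, of x] x jP by blast
  obtain y' where y': "y j = Some y'" "y' \<in> A j as"
    using snoc_in_Hb_iff[OF nt, of y] y jP by blast
  have "as \<in> active_hist Hb P j"
    using nt jP by (simp add: active_hist_def)
  moreover have "x' \<noteq> y'"
    using x'(1) y'(1) assms(3) by simp
  ultimately show thesis
    using that x' y' by blast
qed

lemma type_at_disjoint_after_divergence:
  assumes "as @ x # r1 \<in> Hb" "as @ y # r2 \<in> Hb" "x j \<noteq> y j"
  shows "type_at Th j (as @ x # r1) \<inter> type_at Th j (as @ y # r2) = {}"
proof -
  obtain x' y' where xy: "as \<in> active_hist Hb P j" "x j = Some x'" "y j = Some y'"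
    "x' \<in> A j as" "y' \<in> A j as" "x' \<noteq> y'"
    using divergence_point[OF assms] .
  have "type_at Th j (as @ x # r1) \<subseteq> x'"
    using type_at_antimono[OF assms(1), of "as @ [x]" j] xy(2) by (simp add: type_at_snoc)
  moreover have "type_at Th j (as @ y # r2) \<subseteq> y'"
    using type_at_antimono[OF assms(2), of "as @ [y]" j] xy(3) by (simp add: type_at_snoc)
  moreover have "x' \<inter> y' = {}"
    using A_disjoint[of as j x' y'] xy by (simp add: active_hist_def)
  ultimately show ?thesis
    by blast
qed

lemma ThetaP_overlap_comparable:
  assumes "h1 \<in> Hb" "h2 \<in> Hb" "\<theta> \<in> ThetaP Th h1" "\<theta> \<in> ThetaP Th h2"
  shows "prefix h1 h2 \<or> prefix h2 h1"
proof (rule ccontr)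
  assume "\<not> ?thesis"
  then obtain as x r1 y r2 where d: "x \<noteq> y" "h1 = as @ x # r1" "h2 = as @ y # r2"
    using parallel_decomp unfolding parallel_def by blast
  then obtain j where "x j \<noteq> y j"
    by (auto simp: fun_eq_iff)
  then have "type_at Th j h1 \<inter> type_at Th j h2 = {}"
    using type_at_disjoint_after_divergence[of as x r1 y r2 j] assms(1,2) d by simp
  moreover have "\<theta> j \<in> type_at Th j h1" "\<theta> j \<in> type_at Th j h2"
    using assms(3,4) by (simp_all add: ThetaP_iff)
  ultimately show False
    by blast
qed

lemma ThetaM_overlap_divergence:
  assumes "h1 \<in> Hb" "h2 \<in> Hb" "\<theta> \<in> ThetaM Th i h1" "\<theta> \<in> ThetaM Th i h2" "h1 \<parallel> h2"
  obtains as x r1 y r2 where "h1 = as @ x # r1" "h2 = as @ y # r2" "x i \<noteq> y i"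
proof -
  obtain as x r1 y r2 where d: "x \<noteq> y" "h1 = as @ x # r1" "h2 = as @ y # r2"
    using parallel_decomp[OF assms(5)] by blast
  have others: "x j = y j" if "j \<noteq> i" for j
  proof (rule ccontr)
    assume "x j \<noteq> y j"
    then have "type_at Th j h1 \<inter> type_at Th j h2 = {}"
      using type_at_disjoint_after_divergence[of as x r1 y r2 j] assms(1,2) d by simp
    moreover have "\<theta> j \<in> type_at Th j h1" "\<theta> j \<in> type_at Th j h2"
      using assms(3,4) that by (simp_all add: ThetaM_iff)
    ultimately show False
      by blast
  qed
  have "x i \<noteq> y i"
  proof
    assume "x i = y i"
    then have "x = y"
      using others by (intro ext) (metis)
    then show False
      using d(1) by simp
  qed
  then show thesis
    using that d by blast
qed

lemma ThetaP_child:
  assumes g: "g \<in> nonterm_hist Hb" and \<theta>: "\<theta> \<in> ThetaP Th g"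
  obtains p where "g @ [p] \<in> Hb" "\<theta> \<in> ThetaP Th (g @ [p])"
proof -
  have "\<exists>x\<in>A j g. \<theta> j \<in> x" if "j \<in> P g" for j
    using Union_A_eq_type_at[OF g that] \<theta> by (auto simp: ThetaP_iff)
  then obtain ch where ch: "\<forall>j\<in>P g. ch j \<in> A j g \<and> \<theta> j \<in> ch j"
    using bchoice[of "P g" "\<lambda>j x. x \<in> A j g \<and> \<theta> j \<in> x"] by blast
  define p where "p j = (if j \<in> P g then Some (ch j) else None)" for j
  have "g @ [p] \<in> Hb"
    using snoc_in_Hb_iff[OF g] ch by (auto simp: p_def dom_def)
  moreover have "\<theta> \<in> ThetaP Th (g @ [p])"
    using \<theta> ch by (simp add: ThetaP_iff type_at_snoc p_def)
  ultimately show thesis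
    using that by blast
qed

lemma ThetaP_snoc_action:
  assumes gp: "g @ [p] \<in> Hb" and \<theta>: "\<theta> \<in> ThetaP Th (g @ [p])"
    and a: "j \<in> P g" "a \<in> A j g" "\<theta> j \<in> a"
  shows "p j = Some a"
proof -
  have g: "g \<in> nonterm_hist Hb"
    using nonterm_of_snoc gp by blast
  obtain a' where a': "p j = Some a'" "a' \<in> A j g"
    using snoc_in_Hb_iff[OF g] gp a(1) by blast
  then have "\<theta> j \<in> a'"
    using \<theta> by (auto simp: ThetaP_iff type_at_snoc dest: spec[of _ j])
  then have "a' = a"
    using A_disjoint[OF g a(1)] a'(2) a(2,3) by blast
  with a' show ?thesis
    by simp
qed

lemma ThetaP_extends_to_terminal:
  assumes "g \<in> Hb" "\<theta> \<in> ThetaP Th g"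
  obtains z where "z \<in> terminal Hb" "prefix g z" "\<theta> \<in> ThetaP Th z"
proof -
  obtain n where n: "\<forall>h\<in>Hb. length h \<le> n"
    using length_bounded by blast
  have "\<exists>z\<in>terminal Hb. prefix g z \<and> \<theta> \<in> ThetaP Th z"
    using assms
  proof (induction "n - length g" arbitrary: g rule: less_induct)
    case less
    show ?case
    proof (cases "g \<in> terminal Hb")
      case True
      then show ?thesis
        using less.prems(2) by (intro bexI[of _ g]) simp_all
    next
      case False
      then have "g \<in> nonterm_hist Hb"
        using less.prems(1) by (simp add: nonterm_hist_def)
      then obtain p where p: "g @ [p] \<in> Hb" "\<theta> \<in> ThetaP Th (g @ [p])"
        using ThetaP_child less.prems(2) by blast
      have "n - length (g @ [p]) < n - length g"
        using n[rule_format, OF p(1)] by simp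
      then obtain z where z: "z \<in> terminal Hb" "prefix (g @ [p]) z" "\<theta> \<in> ThetaP Th z"
        using less.hyps[OF _ p] by blast
      moreover have "prefix g z"
        using prefix_order.trans[OF _ z(2), of g] by simp
      ultimately show ?thesis
        by blast
    qed
  qed
  then show thesis
    using that by blast
qed

end

locale gradual_extended = gradual Th f Hb P A Info X
  for Th :: "'n \<Rightarrow> 't set"
    and f :: "('n \<Rightarrow> 't) \<Rightarrow> 'x"
    and Hb :: "('n, 't set) hist set"
    and P A Info X +
  fixes i :: 'n
    and Zi :: "('n, 't set) hist set set"
  assumes Zi_partition: "is_partition Zi (terminal Hb)"
    and recall: "perfect_recall i (Info i \<union> Zi)"
begin

abbreviation ext_info :: "('n, 't set) hist set set" where
  "ext_info \<equiv> Info i \<union> Zi"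

lemma ext_info_cases:
  assumes "c \<in> ext_info" "u \<in> c"
  shows "c \<in> Info i \<and> u \<in> active_hist Hb P i \<or> c \<in> Zi \<and> u \<in> terminal Hb"
proof (cases "c \<in> Info i")
  case True
  then show ?thesis
    using Info_active assms(2) by blast
next
  case False
  then have "c \<in> Zi"
    using assms(1) by blast
  then show ?thesis
    using is_partition_Union[OF Zi_partition] assms(2) by blast
qed

lemma ext_info_in_Hb: "c \<in> ext_info \<Longrightarrow> u \<in> c \<Longrightarrow> u \<in> Hb"
  using ext_info_cases[of c u] by (auto simp: active_hist_def nonterm_hist_def terminal_def)

lemma ext_info_nonempty: "c \<in> ext_info \<Longrightarrow> c \<noteq> {}"
  using is_partition_nonempty[OF Info_partition[of i]] is_partition_nonempty[OF Zi_partition]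
  by blast

lemma ext_info_disjoint:
  assumes "c \<in> ext_info" "d \<in> ext_info" "u \<in> c" "u \<in> d"
  shows "c = d"
proof -
  have "u \<notin> active_hist Hb P i \<or> u \<notin> terminal Hb"
    by (simp add: active_hist_def nonterm_hist_def)
  then show ?thesis
    using ext_info_cases[OF assms(1,3)] ext_info_cases[OF assms(2,4)] assms(3,4)
      is_partition_disjoint[OF Info_partition[of i]] is_partition_disjoint[OF Zi_partition]
    by blast
qed

lemma own_eq: "c \<in> ext_info \<Longrightarrow> u \<in> c \<Longrightarrow> v \<in> c \<Longrightarrow> own i u = own i v"
  using recall unfolding perfect_recall_def by blast

lemma info_prec_prefix:
  assumes "c \<in> ext_info" "d \<in> ext_info" "info_prec c d" "g \<in> d"
  obtains l where "l \<in> c" "prefix l g"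
  using assms recall unfolding perfect_recall_def info_prec_def by blast

lemma succ_info_in_ext_info: "b' \<in> succ_info ext_info b \<Longrightarrow> b' \<in> ext_info"
  unfolding succ_info_def by blast

lemma succ_act_in_succ_info: "b' \<in> succ_act i ext_info b a \<Longrightarrow> b' \<in> succ_info ext_info b"
  unfolding succ_act_def by blast

lemma ext_info_prefix_eq:
  assumes "c \<in> ext_info" "u \<in> c" "v \<in> c" "prefix u v"
  shows "u = v"
proof (rule ccontr)
  assume "u \<noteq> v"
  from ext_info_cases[OF assms(1,2)] show False
  proof
    assume "c \<in> Info i \<and> u \<in> active_hist Hb P i"
    then have "length (own i u) < length (own i v)"
      using own_length_less ext_info_in_Hb[OF assms(1,3)] assms(4) \<open>u \<noteq> v\<close> by blast
    then show False
      using own_eq[OF assms(1-3)] by simp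
  next
    assume "c \<in> Zi \<and> u \<in> terminal Hb"
    then show False
      using ext_info_in_Hb[OF assms(1,3)] assms(4) \<open>u \<noteq> v\<close> unfolding terminal_def by blast
  qed
qed

lemma succ_info_between:
  assumes "b1 \<in> succ_info ext_info b" "b \<in> ext_info" "c \<in> ext_info"
    and "g \<in> b" "l \<in> c" "h1 \<in> b1" "prefix g l" "prefix l h1"
  shows "l = g \<or> l = h1"
proof (rule ccontr)
  assume ne: "\<not> (l = g \<or> l = h1)"
  have b1: "b1 \<in> ext_info" and immediate: "\<not> (\<exists>c\<in>ext_info. info_sprec b c \<and> info_sprec c b1)"
    using assms(1) unfolding succ_info_def by blast+
  have "c \<noteq> b"
    using ext_info_prefix_eq[OF assms(2,4) _ assms(7)] assms(5) ne by blast
  moreover have "c \<noteq> b1"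
    using ext_info_prefix_eq[OF b1 _ assms(6,8)] assms(5) ne by blast
  ultimately have "info_sprec b c" "info_sprec c b1"
    using assms(4-8) unfolding info_sprec_def info_prec_def by blast+
  then show False
    using immediate assms(3) by blast
qed

lemma succ_info_intro:
  assumes b: "b \<in> ext_info" "h \<in> b" and b': "b' \<in> ext_info" "g \<in> b'"
    and hg: "prefix h g" "h \<noteq> g"
    and nothing_between: "\<And>l. l \<in> \<Union>ext_info \<Longrightarrow> prefix h l \<Longrightarrow> prefix l g \<Longrightarrow> l = h \<or> l = g"
  shows "b' \<in> succ_info ext_info b"
proof -
  have "b \<noteq> b'"
    using ext_info_prefix_eq[OF b'(1) _ b'(2) hg(1)] b(2) hg(2) by blast
  then have sprec: "info_sprec b b'"
    using b b' hg(1) unfolding info_sprec_def info_prec_def by blast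
  have "\<not> info_sprec c b'" if c: "c \<in> ext_info" "info_sprec b c" for c
  proof
    assume cb': "info_sprec c b'"
    then obtain l where l: "l \<in> c" "prefix l g"
      using info_prec_prefix[OF c(1) b'(1) _ b'(2)] unfolding info_sprec_def by blast
    obtain k where k: "k \<in> b" "prefix k l"
      using info_prec_prefix[OF b(1) c(1) _ l(1)] c(2) unfolding info_sprec_def by blast
    have "prefix k h \<or> prefix h k"
      using prefix_same_cases[OF prefix_order.trans[OF k(2) l(2)] hg(1)] .
    then have "k = h"
      using ext_info_prefix_eq[OF b(1) k(1) b(2)] ext_info_prefix_eq[OF b(1) b(2) k(1)] by blast
    then have "l = h \<or> l = g"
      using nothing_between l c(1) k(2) by blast
    then show False
      using ext_info_disjoint b b' c(1) l(1) c(2) cb' unfolding info_sprec_def by blast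
  qed
  then show ?thesis
    using sprec b'(1) unfolding succ_info_def by blast
qed

lemma first_succ_info:
  assumes b: "b \<in> ext_info" "h \<in> b" and z: "z \<in> terminal Hb" "prefix (h @ [p]) z"
  obtains b' g where "b' \<in> succ_info ext_info b" "g \<in> b'" "prefix (h @ [p]) g" "prefix g z"
proof -
  let ?Q = "\<lambda>g. g \<in> \<Union>ext_info \<and> prefix (h @ [p]) g \<and> prefix g z"
  have "?Q z"
    using z is_partition_Union[OF Zi_partition] by auto
  then obtain g where g: "?Q g" and least: "\<And>g'. ?Q g' \<Longrightarrow> length g \<le> length g'"
    using ex_has_least_nat[of ?Q z length] by blast
  obtain b' where b': "b' \<in> ext_info" "g \<in> b'"
    using g by blast
  have hg: "prefix h g" "h \<noteq> g"
    using g prefix_order.trans[of h "h @ [p]" g] prefix_length_le[of "h @ [p]" g] by auto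
  have "l = h \<or> l = g" if l: "l \<in> \<Union>ext_info" "prefix h l" "prefix l g" for l
  proof (rule ccontr)
    assume ne: "\<not> (l = h \<or> l = g)"
    have "length h < length l"
      using l(2) ne prefix_length_less[of h l] by (auto simp: strict_prefix_def)
    then have "prefix (h @ [p]) l"
      using prefix_length_prefix[of "h @ [p]" g l] g l(3) by simp
    then have "?Q l"
      using l(1,3) g prefix_order.trans[of l g z] by blast
    then have "length g \<le> length l"
      by (rule least)
    then show False
      using l(3) ne by (auto simp: prefix_def)
  qed
  then have "b' \<in> succ_info ext_info b"
    using succ_info_intro[OF b b' hg] by blast
  then show thesis
    using that b'(2) g by blast
qed

lemma succ_info_comparable_eq:
  assumes "b1 \<in> succ_info ext_info b" "b2 \<in> succ_info ext_info b" "h1 \<in> b1" "h2 \<in> b2"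
    and "prefix h1 h2"
  shows "b1 = b2"
proof (rule ccontr)
  assume "b1 \<noteq> b2"
  then have "info_sprec b1 b2"
    using assms(3-5) unfolding info_sprec_def info_prec_def by blast
  moreover have "info_sprec b b1" "b1 \<in> ext_info"
    using assms(1) unfolding succ_info_def by blast+
  ultimately show False
    using assms(2) unfolding succ_info_def by blast
qed

lemma succ_info_has_prefix:
  assumes "b \<in> ext_info" "b' \<in> succ_info ext_info b" "h' \<in> b'"
  obtains g where "g \<in> b" "prefix g h'"
  using info_prec_prefix[OF assms(1) _ _ assms(3)] assms(2)
  unfolding succ_info_def info_sprec_def by blast

lemma own_succ_act:
  assumes "b \<in> ext_info" "b' \<in> succ_act i ext_info b a" "h' \<in> b'" "g \<in> b"
  obtains r where "own i h' = own i g @ a # r"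
proof -
  obtain g0 h0 p where x: "g0 \<in> b" "h0 \<in> b'" "prefix (g0 @ [p]) h0" "p i = Some a"
    using assms(2) unfolding succ_act_def by blast
  have b': "b' \<in> ext_info"
    using assms(2) unfolding succ_act_def succ_info_def by blast
  obtain r where "h0 = g0 @ [p] @ r"
    using x(3) by (auto elim: prefixE)
  then have "own i h0 = own i g0 @ a # own i r"
    using x(4) by (simp add: own_Cons)
  moreover have "own i h' = own i h0"
    using own_eq[OF b' assms(3) x(2)] .
  moreover have "own i g0 = own i g"
    using own_eq[OF assms(1) x(1) assms(4)] .
  ultimately show thesis
    using that by auto
qed

lemma own_succ_act_split_after:
  assumes "b \<in> ext_info" "g \<in> b"
    and "b1 \<in> succ_act i ext_info b a" "b2 \<in> succ_act i ext_info b a" "h1 \<in> b1" "h2 \<in> b2"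
    and "own i h1 = us @ x' # r1" "own i h2 = us @ y' # r2" "x' \<noteq> y'"
  shows "length (own i g) < length us"
proof -
  obtain r1' r2' where "own i h1 = own i g @ a # r1'" "own i h2 = own i g @ a # r2'"
    using own_succ_act[OF assms(1,3,5,2)] own_succ_act[OF assms(1,4,6,2)] by metis
  then have "us @ x' # r1 = own i g @ a # r1'" "us @ y' # r2 = own i g @ a # r2'"
    using assms(7,8) by simp_all
  then show ?thesis
    using same_prefix_nth_eq assms(9) by (meson not_le)
qed

lemma succ_act_no_split_at_own_move:
  assumes b: "b \<in> Info i"
    and b1: "b1 \<in> succ_act i ext_info b a" and b2: "b2 \<in> succ_act i ext_info b a"
    and h1: "as @ x # r1 \<in> b1" and h2: "as @ y # r2 \<in> b2" and xy: "x i \<noteq> y i"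
  shows False
proof -
  have bE: "b \<in> ext_info"
    using b by blast
  have s1: "b1 \<in> succ_info ext_info b"
    using b1 by (rule succ_act_in_succ_info)
  have Hb: "as @ x # r1 \<in> Hb" "as @ y # r2 \<in> Hb"
    using ext_info_in_Hb[OF succ_info_in_ext_info[OF s1] h1]
      ext_info_in_Hb[OF succ_info_in_ext_info[OF succ_act_in_succ_info[OF b2]] h2] .
  obtain x' y' where d: "as \<in> active_hist Hb P i" "x i = Some x'" "y i = Some y'" "x' \<noteq> y'"
    using divergence_point[OF Hb xy] by blast
  obtain g where g: "g \<in> b" "prefix g (as @ x # r1)"
    using succ_info_has_prefix[OF bE s1 h1] by blast
  have "own i (as @ x # r1) = own i as @ x' # own i r1" "own i (as @ y # r2) = own i as @ y' # own i r2"
    using d(2,3) by (simp_all add: own_Cons)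
  \<comment> \<open>Both histories list i's moves as those of g followed by a, so they split after g.\<close>
  then have less: "length (own i g) < length (own i as)"
    using own_succ_act_split_after[OF bE g(1) b1 b2 h1 h2] d(4) by blast
  have "prefix g as \<or> prefix as g"
    using prefix_same_cases[OF g(2), of as] by simp
  moreover have "\<not> prefix as g"
    using prefix_length_le[OF prefix_own[of as g i]] less by linarith
  ultimately have "prefix g as" "as \<noteq> g"
    by auto
  obtain c where c: "c \<in> ext_info" "as \<in> c"
    using d(1) is_partition_Union[OF Info_partition[of i]] by blast
  then have "as = g \<or> as = as @ x # r1"
    using succ_info_between[OF s1 bE c(1) g(1) c(2) h1 \<open>prefix g as\<close>] by simp
  then show False
    using \<open>as \<noteq> g\<close> by simp
qed

lemma ThetaP_reaches_succ_act:
  assumes b: "b \<in> Info i" "h \<in> b" and \<theta>: "\<theta> \<in> ThetaP Th h" and a: "a \<in> A i h" "\<theta> i \<in> a"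
  obtains b' g where "b' \<in> succ_act i ext_info b a" "g \<in> b'" "\<theta> \<in> ThetaP Th g"
proof -
  have h: "h \<in> nonterm_hist Hb" "i \<in> P h"
    using Info_active[OF b] by (simp_all add: active_hist_def)
  obtain p where p: "h @ [p] \<in> Hb" "\<theta> \<in> ThetaP Th (h @ [p])"
    using ThetaP_child[OF h(1) \<theta>] .
  have pi: "p i = Some a"
    using ThetaP_snoc_action[OF p h(2) a] .
  obtain z where z: "z \<in> terminal Hb" "prefix (h @ [p]) z" "\<theta> \<in> ThetaP Th z"
    using ThetaP_extends_to_terminal[OF p] .
  obtain b' g where bg: "b' \<in> succ_info ext_info b" "g \<in> b'" "prefix (h @ [p]) g" "prefix g z"
    using first_succ_info[of b h z p] b z by blast
  have "\<theta> \<in> ThetaP Th g"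
    using ThetaP_antimono[OF _ bg(4)] z(1,3) unfolding terminal_def by blast
  moreover have "b' \<in> succ_act i ext_info b a"
    using bg b(2) pi unfolding succ_act_def by blast
  ultimately show thesis
    using that bg(2) by blast
qed

lemma ThetaS_nonempty:
  assumes "c \<in> ext_info"
  shows "ThetaS Th c \<noteq> {}"
proof -
  obtain h where "h \<in> c"
    using ext_info_nonempty[OF assms] by blast
  then show ?thesis
    using ThetaP_nonempty[OF ext_info_in_Hb[OF assms]] unfolding ThetaS_def by blast
qed

lemma ThetaMS_nonempty:
  assumes "c \<in> ext_info"
  shows "ThetaMS Th i c \<noteq> {}"
proof -
  obtain h where "h \<in> c"
    using ext_info_nonempty[OF assms] by blast
  then show ?thesis
    using ThetaM_nonempty[OF ext_info_in_Hb[OF assms]] unfolding ThetaMS_def by blast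
qed

lemma ThetaS_succ_info_subset:
  assumes "b \<in> ext_info" "b' \<in> succ_info ext_info b"
  shows "ThetaS Th b' \<subseteq> ThetaS Th b"
proof
  fix \<theta> assume "\<theta> \<in> ThetaS Th b'"
  then obtain h' where h': "h' \<in> b'" "\<theta> \<in> ThetaP Th h'"
    unfolding ThetaS_def by blast
  obtain g where "g \<in> b" "prefix g h'"
    using succ_info_has_prefix[OF assms h'(1)] .
  then show "\<theta> \<in> ThetaS Th b"
    using ThetaP_antimono[OF ext_info_in_Hb[OF succ_info_in_ext_info[OF assms(2)] h'(1)]] h'(2)
    unfolding ThetaS_def by blast
qed

lemma ThetaMS_succ_info_subset:
  assumes "b \<in> ext_info" "b' \<in> succ_info ext_info b"
  shows "ThetaMS Th i b' \<subseteq> ThetaMS Th i b"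
proof
  fix \<theta> assume "\<theta> \<in> ThetaMS Th i b'"
  then obtain h' where h': "h' \<in> b'" "\<theta> \<in> ThetaM Th i h'"
    unfolding ThetaMS_def by blast
  obtain g where "g \<in> b" "prefix g h'"
    using succ_info_has_prefix[OF assms h'(1)] .
  then show "\<theta> \<in> ThetaMS Th i b"
    using ThetaM_antimono[OF ext_info_in_Hb[OF succ_info_in_ext_info[OF assms(2)] h'(1)]] h'(2)
    unfolding ThetaMS_def by blast
qed

lemma ThetaS_succ_info_disjoint:
  assumes "b1 \<in> succ_info ext_info b" "b2 \<in> succ_info ext_info b" "b1 \<noteq> b2"
  shows "ThetaS Th b1 \<inter> ThetaS Th b2 = {}"
proof (rule ccontr)
  assume "\<not> ?thesis"
  then obtain h1 h2 \<theta> where h: "h1 \<in> b1" "h2 \<in> b2" "\<theta> \<in> ThetaP Th h1" "\<theta> \<in> ThetaP Th h2"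
    unfolding ThetaS_def by blast
  then have "prefix h1 h2 \<or> prefix h2 h1"
    using ThetaP_overlap_comparable ext_info_in_Hb succ_info_in_ext_info assms(1,2) by blast
  then show False
    using succ_info_comparable_eq assms h(1,2) by metis
qed

lemma ThetaS_succ_info_cover:
  assumes b: "b \<in> Info i"
  shows "ThetaS Th b \<subseteq> (\<Union>b'\<in>succ_info ext_info b. ThetaS Th b')"
proof
  fix \<theta> assume "\<theta> \<in> ThetaS Th b"
  then obtain h where h: "h \<in> b" "\<theta> \<in> ThetaP Th h"
    unfolding ThetaS_def by blast
  have "h \<in> nonterm_hist Hb" "i \<in> P h"
    using Info_active[OF b h(1)] by (simp_all add: active_hist_def)
  moreover have "\<theta> i \<in> type_at Th i h"
    using h(2) by (simp add: ThetaP_iff)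
  ultimately obtain a where "a \<in> A i h" "\<theta> i \<in> a"
    using Union_A_eq_type_at by blast
  then obtain b' g where "b' \<in> succ_act i ext_info b a" "g \<in> b'" "\<theta> \<in> ThetaP Th g"
    using ThetaP_reaches_succ_act[OF b h] by blast
  then show "\<theta> \<in> (\<Union>b'\<in>succ_info ext_info b. ThetaS Th b')"
    using succ_act_in_succ_info unfolding ThetaS_def by blast
qed

lemma ThetaMS_succ_act_disjoint:
  assumes b: "b \<in> Info i"
    and s: "b1 \<in> succ_act i ext_info b a" "b2 \<in> succ_act i ext_info b a" "b1 \<noteq> b2"
  shows "ThetaMS Th i b1 \<inter> ThetaMS Th i b2 = {}"
proof (rule ccontr)
  assume "\<not> ?thesis"
  then obtain h1 h2 \<theta> where h: "h1 \<in> b1" "h2 \<in> b2" "\<theta> \<in> ThetaM Th i h1" "\<theta> \<in> ThetaM Th i h2"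
    unfolding ThetaMS_def by blast
  have s': "b1 \<in> succ_info ext_info b" "b2 \<in> succ_info ext_info b"
    using s(1,2) by (simp_all add: succ_act_in_succ_info)
  have "h1 \<in> Hb" "h2 \<in> Hb"
    using ext_info_in_Hb succ_info_in_ext_info s' h(1,2) by blast+
  show False
  proof (cases "h1 \<parallel> h2")
    case True
    then obtain as x r1 y r2 where "h1 = as @ x # r1" "h2 = as @ y # r2" "x i \<noteq> y i"
      using ThetaM_overlap_divergence \<open>h1 \<in> Hb\<close> \<open>h2 \<in> Hb\<close> h(3,4) by blast
    then show False
      using succ_act_no_split_at_own_move[OF b s(1,2)] h(1,2) by blast
  next
    case False
    then have "prefix h1 h2 \<or> prefix h2 h1"
      unfolding parallel_def by blast
    then show False
      using succ_info_comparable_eq s' s(3) h(1,2) by metis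
  qed
qed

lemma ThetaMS_succ_act_cover:
  assumes b: "b \<in> Info i" and a: "a \<in> A_info A i b"
  shows "ThetaMS Th i b \<subseteq> (\<Union>b'\<in>succ_act i ext_info b a. ThetaMS Th i b')"
proof
  fix \<theta> assume "\<theta> \<in> ThetaMS Th i b"
  then obtain h where h: "h \<in> b" "\<theta> \<in> ThetaM Th i h"
    unfolding ThetaMS_def by blast
  have nt: "h \<in> nonterm_hist Hb" "i \<in> P h"
    using Info_active[OF b h(1)] by (simp_all add: active_hist_def)
  have ah: "a \<in> A i h"
    using a A_info_eq[OF b h(1)] by simp
  \<comment> \<open>Giving i a type in a forces the path built from the full profile to take a at h.\<close>
  then obtain t where t: "t \<in> a"
    using A_nonempty[OF nt] by blast
  then have "t \<in> type_at Th i h"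
    using ah Union_A_eq_type_at[OF nt] by blast
  then have "\<theta>(i := t) \<in> ThetaP Th h"
    using ThetaM_upd_in_ThetaP[OF h(2)] by blast
  then obtain b' g where "b' \<in> succ_act i ext_info b a" "g \<in> b'" "\<theta>(i := t) \<in> ThetaP Th g"
    using ThetaP_reaches_succ_act[OF b h(1) _ ah] t by (metis fun_upd_same)
  then show "\<theta> \<in> (\<Union>b'\<in>succ_act i ext_info b a. ThetaMS Th i b')"
    using ThetaP_upd_in_ThetaM[OF h(2)] unfolding ThetaMS_def by blast
qed

lemma ThetaS_succ_info_partition:
  assumes "b \<in> Info i"
  shows "indexed_partition (succ_info ext_info b) (ThetaS Th) (ThetaS Th b)"
  unfolding indexed_partition_def
  using assms ThetaS_nonempty[OF succ_info_in_ext_info] ThetaS_succ_info_disjoint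
    ThetaS_succ_info_subset[of b] ThetaS_succ_info_cover
  by (intro conjI ballI impI equalityI UN_least) auto

lemma ThetaMS_succ_act_partition:
  assumes "b \<in> Info i" "a \<in> A_info A i b"
  shows "indexed_partition (succ_act i ext_info b a) (ThetaMS Th i) (ThetaMS Th i b)"
  unfolding indexed_partition_def
  using assms ThetaMS_nonempty[OF succ_info_in_ext_info[OF succ_act_in_succ_info]]
    ThetaMS_succ_act_disjoint ThetaMS_succ_info_subset[of b, OF _ succ_act_in_succ_info]
    ThetaMS_succ_act_cover
  by (intro conjI ballI impI equalityI UN_least) auto

end

theorem proposition2:
  fixes Th :: "'n::finite \<Rightarrow> 't set"
    and f :: "('n \<Rightarrow> 't) \<Rightarrow> 'x"
    and Hb :: "('n, 't set) hist set"
    and P :: "('n, 't set) hist \<Rightarrow> 'n set"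
    and A :: "'n \<Rightarrow> ('n, 't set) hist \<Rightarrow> 't set set"
    and Info :: "'n \<Rightarrow> ('n, 't set) hist set set"
    and X :: "('n, 't set) hist \<Rightarrow> 'x"
    and i :: 'n
    and Zi :: "('n, 't set) hist set set"
  assumes "gradual_mechanism Th f Hb P A Info X"
    and "is_partition Zi (terminal Hb)"
    and "perfect_recall i (Info i \<union> Zi)"
  shows "(\<forall>b\<in>Info i. indexed_partition (succ_info (Info i \<union> Zi) b) (ThetaS Th) (ThetaS Th b)) \<and>
         (\<forall>b\<in>Info i. \<forall>a\<in>A_info A i b.
            indexed_partition (succ_act i (Info i \<union> Zi) b a) (ThetaMS Th i) (ThetaMS Th i b))"
proof -
  interpret gradual_extended Th f Hb P A Info X i Zi
    using assms by unfold_locales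
  show ?thesis
    using ThetaS_succ_info_partition ThetaMS_succ_act_partition by blast
qed

end
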